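(* Let $G=(V_G,E_G)$ be a graph with $N$ vertices, $g\ge0$, and $H$ the transverse-field Ising Hamiltonian on $G$. Then $$\min_{|\varphi\rangle\text{ stabilizer state}}\langle\varphi|H|\varphi\rangle=\min_{n\in\{0,1,\dots,N\}}\big(-\mathcal{E}(n)-g(N-n)\big).$$ Moreover, any vertex set $V$ minimizing $f(S)=-|E(S)|-g|V_G\setminus S|$ over $S\subseteq V_G$ is an $n$-optimal vertex set for $n=|V|$.
   Context: A graph $G=(V_G,E_G)$ is finite, simple and undirected, with $V_G=\{q_0,\dots,q_{N-1}\}$, vertex $q_i$ corresponding to qubit $i$. For $S\subseteq V_G$, $E(S)$ is the set of edges with both endpoints in $S$. The transverse-field Ising Hamiltonian on $G$ is $H=-\sum_{\langle q_i,q_j\rangle\in E_G}Z_iZ_j-g\sum_{q_i\in V_G}X_i$; stabilizer states are $N$-qubit states whose stabilizer group consists of $2^N$ Pauli-group elements. The edge-function is $\mathcal{E}(n)=\max\{|E(S)|: S\subseteq V_G,\ |S|\le n\}$ for $0\le n\le N$ (so $\mathcal{E}(0)=\mathcal{E}(1)=0$). A set $S\subseteq V_G$ with $|S|\le n$ and $|E(S)|=\mathcal{E}(n)$ is called an $n$-optimal vertex set. *)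

theory Defs
  imports "Jordan_Normal_Form.Matrix" "Jordan_Normal_Form.Conjugate"
begin

(* N qubits; computational basis states |c>, c < 2^N, where bit t of c is the value of qubit t. *)

(* The Pauli operator  i^k X^a Z^b  (a, b bit masks < 2^N giving the X- and Z-parts):
   it maps |c> to i^k (-1)^(#{t<N. bit b t and bit c t}) |c xor a>.  Since Y = i X Z,
   these are exactly the elements of the N-qubit Pauli group. *)
definition pauli_op :: "nat \<Rightarrow> nat \<Rightarrow> nat \<Rightarrow> nat \<Rightarrow> complex mat" where
  "pauli_op N k a b = mat (2^N) (2^N) (\<lambda>(row, col).
      if row = Bit_Operations.xor col a
      then \<i> ^ k * (-1) ^ card {t. t < N \<and> bit b t \<and> bit col t}
      else 0)"

definition pauli_group :: "nat \<Rightarrow> complex mat set" where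
  "pauli_group N = {pauli_op N k a b | k a b. k < 4 \<and> a < 2^N \<and> b < 2^N}"

definition Xop :: "nat \<Rightarrow> nat \<Rightarrow> complex mat" where
  "Xop N i = pauli_op N 0 (2^i) 0"

definition Zop :: "nat \<Rightarrow> nat \<Rightarrow> complex mat" where
  "Zop N i = pauli_op N 0 0 (2^i)"

definition stab_group :: "nat \<Rightarrow> complex vec \<Rightarrow> complex mat set" where
  "stab_group N \<phi> = {P \<in> pauli_group N. P *\<^sub>v \<phi> = \<phi>}"

definition stabilizer_state :: "nat \<Rightarrow> complex vec \<Rightarrow> bool" where
  "stabilizer_state N \<phi> \<longleftrightarrow> \<phi> \<in> carrier_vec (2^N) \<and> \<phi> \<bullet>c \<phi> = 1
      \<and> card (stab_group N \<phi>) = 2^N"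

(* A simple graph on vertices {0..<N}: each undirected edge {q_i,q_j} is stored once as (i,j), i<j. *)
definition simple_graph :: "nat \<Rightarrow> (nat \<times> nat) set \<Rightarrow> bool" where
  "simple_graph N E \<longleftrightarrow> (\<forall>(i, j) \<in> E. i < j \<and> j < N)"

definition edges_in :: "(nat \<times> nat) set \<Rightarrow> nat set \<Rightarrow> (nat \<times> nat) set" where
  "edges_in E S = {(i, j) \<in> E. i \<in> S \<and> j \<in> S}"

definition edge_fun :: "nat \<Rightarrow> (nat \<times> nat) set \<Rightarrow> nat \<Rightarrow> nat" where
  "edge_fun N E n = Max {card (edges_in E S) | S. S \<subseteq> {0..<N} \<and> card S \<le> n}"

definition n_optimal :: "nat \<Rightarrow> (nat \<times> nat) set \<Rightarrow> nat \<Rightarrow> nat set \<Rightarrow> bool" where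
  "n_optimal N E n S \<longleftrightarrow> S \<subseteq> {0..<N} \<and> card S \<le> n \<and> card (edges_in E S) = edge_fun N E n"

definition ising_H :: "nat \<Rightarrow> (nat \<times> nat) set \<Rightarrow> real \<Rightarrow> complex mat" where
  "ising_H N E g = mat (2^N) (2^N) (\<lambda>rc.
      - (\<Sum>(i, j) \<in> E. (Zop N i * Zop N j) $$ rc)
      - complex_of_real g * (\<Sum>i<N. Xop N i $$ rc))"

definition expect :: "complex mat \<Rightarrow> complex vec \<Rightarrow> complex" where
  "expect H \<phi> = (H *\<^sub>v \<phi>) \<bullet>c \<phi>"

definition cost_f :: "nat \<Rightarrow> (nat \<times> nat) set \<Rightarrow> real \<Rightarrow> nat set \<Rightarrow> real" where
  "cost_f N E g S = - real (card (edges_in E S)) - g * real (card ({0..<N} - S))"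

end

theory Submission
  imports Defs
begin

(*
  For a normalized state the Pauli expectation values satisfy the Parseval identity
  \<Sum>_{a,b} |<X^a Z^b>|^2 = 2^N, and each Pauli operator stabilizing the state contributes 1.
  A stabilizer state has 2^N stabilizers, so every other expectation value vanishes.
  If <X_i> \<noteq> 0 then X_i is (up to phase) a stabilizer, and since it anticommutes with Z_i Z_j,
  the latter is not, so <Z_i Z_j> = 0.  Hence, with T the set of qubits where <X_i> = 0,
  only edges inside T contribute and <H> \<ge> -|E(T)| - g |V \<setminus> T| = f(T) \<ge> min_n (-\<E>(n) - g (N - n)).
  The bound is attained by the product state with |0> on an optimal T and |+> elsewhere.
  Finally, a minimizer V of f carries at least as many edges as any set of at most |V| vertices,
  because such a set also leaves at least as many vertices outside.
*)

section \<open>Walsh characters and bit masks\<close>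

(* The phase (-1)^(b \<cdot> c) with which Z^b acts on the basis state |c>. *)
definition walsh :: "nat \<Rightarrow> nat \<Rightarrow> nat \<Rightarrow> complex" where
  "walsh N b c = (-1) ^ card {t. t < N \<and> bit b t \<and> bit c t}"

lemma walsh_commute: "walsh N b c = walsh N c b"
  unfolding walsh_def by (metis (no_types, lifting) Collect_cong)

lemma walsh_0_left [simp]: "walsh N 0 c = 1"
  unfolding walsh_def by simp

lemma walsh_0_right [simp]: "walsh N b 0 = 1"
  unfolding walsh_def by simp

lemma cnj_walsh [simp]: "cnj (walsh N b c) = walsh N b c"
  unfolding walsh_def by simp

lemma card_Un_Int_symdiff:
  assumes "finite A" "finite B"
  shows "card A + card B = card ((A - B) \<union> (B - A)) + 2 * card (A \<inter> B)"
proof -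
  have "A \<union> B = ((A - B) \<union> (B - A)) \<union> (A \<inter> B)" by blast
  moreover have "card (((A - B) \<union> (B - A)) \<union> (A \<inter> B)) = card ((A - B) \<union> (B - A)) + card (A \<inter> B)"
    by (rule card_Un_disjoint) (use assms in auto)
  ultimately show ?thesis using card_Un_Int[OF assms] by simp
qed

lemma walsh_xor_left: "walsh N (xor x y) c = walsh N x c * walsh N y c"
proof -
  define A where "A = {t. t < N \<and> bit x t \<and> bit c t}"
  define B where "B = {t. t < N \<and> bit y t \<and> bit c t}"
  have "{t. t < N \<and> bit (xor x y) t \<and> bit c t} = (A - B) \<union> (B - A)"
    unfolding A_def B_def by (auto simp: bit_xor_iff)
  then have "card A + card B = card {t. t < N \<and> bit (xor x y) t \<and> bit c t} + 2 * card (A \<inter> B)"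
    using card_Un_Int_symdiff[of A B] unfolding A_def B_def by simp
  then have "(-1::complex) ^ (card A + card B) = (-1) ^ card {t. t < N \<and> bit (xor x y) t \<and> bit c t}"
    by (simp add: power_add power_mult)
  then show ?thesis unfolding walsh_def A_def B_def by (simp add: power_add)
qed

lemma walsh_xor_right: "walsh N b (xor c c') = walsh N b c * walsh N b c'"
  by (simp add: walsh_commute[of N b] walsh_xor_left)

lemma walsh_exp_left: "t < N \<Longrightarrow> walsh N (2^t) c = (if bit c t then -1 else 1)"
proof -
  assume "t < N"
  then have "{s. s < N \<and> bit ((2::nat)^t) s \<and> bit c s} = (if bit c t then {t} else {})"
    by (auto simp: bit_exp_iff)
  then show ?thesis unfolding walsh_def by simp
qed

lemma xor_less_exp: "(x::nat) < 2^n \<Longrightarrow> y < 2^n \<Longrightarrow> xor x y < 2^n"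
  by (metis take_bit_nat_eq_self_iff take_bit_xor)

lemma bit_less_exp_imp_less: "(x::nat) < 2^n \<Longrightarrow> bit x t \<Longrightarrow> t < n"
  by (metis bit_take_bit_iff take_bit_nat_eq_self_iff)

lemma less_exp_if_bits_less: "(\<And>t. bit (c::nat) t \<Longrightarrow> t < n) \<Longrightarrow> c < 2^n"
  by (metis bit_eqI bit_take_bit_iff take_bit_nat_less_exp)

lemma xor_eq_iff_eq_xor: "((r::nat) = xor c a) = (c = xor r a)"
  by (metis xor.assoc xor_self_eq xor.right_neutral)

lemma xor_eq_0_iff [simp]: "(xor (x::nat) y = 0) = (x = y)"
  by (metis xor_eq_iff_eq_xor xor.left_neutral)

lemma sum_reindex_xor:
  assumes "a < 2^N"
  shows "(\<Sum>r\<in>{0..<2^N}. f (xor r a)) = (\<Sum>r\<in>{0..<(2::nat)^N}. f r)"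
  by (rule sum.reindex_bij_witness[where i="\<lambda>r. xor r a" and j="\<lambda>r. xor r a"])
     (auto simp: xor_less_exp assms xor.assoc)

lemma sum_walsh:
  assumes "d < 2^N"
  shows "(\<Sum>b\<in>{0..<(2::nat)^N}. walsh N b d) = (if d = 0 then 2^N else 0)"
proof (cases "d = 0")
  case False
  then obtain t where t: "bit d t" using bit_eq_iff[of d 0] by auto
  then have "t < N" using bit_less_exp_imp_less assms by blast
  then have "(\<Sum>b\<in>{0..<(2::nat)^N}. walsh N b d) = (\<Sum>b\<in>{0..<(2::nat)^N}. walsh N (xor b (2^t)) d)"
    using sum_reindex_xor[of "2^t" N "\<lambda>b. walsh N b d"] by simp
  also have "\<dots> = - (\<Sum>b\<in>{0..<(2::nat)^N}. walsh N b d)"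
    using \<open>t < N\<close> t by (simp add: walsh_xor_left walsh_exp_left sum_negf)
  finally show ?thesis using False by simp
qed simp

definition bitmask :: "nat set \<Rightarrow> nat" where
  "bitmask A = (\<Sum>t\<in>A. 2^t)"

lemma bit_bitmask_iff: "finite A \<Longrightarrow> bit (bitmask A) t \<longleftrightarrow> t \<in> A"
proof (induction A arbitrary: t rule: finite_induct)
  case (insert x F)
  have "and ((2::nat)^x) (bitmask F) = 0"
    by (rule bit_eqI) (use insert in \<open>auto simp: bit_and_iff bit_exp_iff\<close>)
  then have "bitmask (insert x F) = or (2^x) (bitmask F)"
    using insert by (simp add: bitmask_def disjunctive_add_eq_or)
  then show ?case using insert by (auto simp: bit_or_iff bit_exp_iff)
qed (simp add: bitmask_def)

definition bits_within :: "nat set \<Rightarrow> nat set" where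
  "bits_within A = {c. \<forall>t. bit c t \<longrightarrow> t \<in> A}"

lemma bits_within_less_exp: "A \<subseteq> {0..<n} \<Longrightarrow> c \<in> bits_within A \<Longrightarrow> c < 2^n"
  unfolding bits_within_def by (rule less_exp_if_bits_less) auto

lemma zero_mem_bits_within [simp]: "0 \<in> bits_within A"
  unfolding bits_within_def by simp

lemma exp_mem_bits_within_iff [simp]: "2^i \<in> bits_within A \<longleftrightarrow> i \<in> A"
  unfolding bits_within_def by (auto simp: bit_exp_iff)

lemma xor_mem_bits_within_iff:
  "a \<in> bits_within A \<Longrightarrow> xor c a \<in> bits_within A \<longleftrightarrow> c \<in> bits_within A"
  unfolding bits_within_def by (auto simp: bit_xor_iff)

lemma card_bits_within:
  assumes "finite A"
  shows "card (bits_within A) = 2 ^ card A"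
proof -
  have "bits_within A = bitmask ` Pow A"
  proof (intro equalityI subsetI)
    fix c assume "c \<in> bits_within A"
    then have sub: "{t. bit c t} \<subseteq> A" by (auto simp: bits_within_def)
    then have "c = bitmask {t. bit c t}"
      using assms by (intro bit_eqI) (simp add: bit_bitmask_iff finite_subset)
    then show "c \<in> bitmask ` Pow A" using sub by auto
  qed (use assms in \<open>auto simp: bits_within_def bit_bitmask_iff finite_subset\<close>)
  moreover have "inj_on bitmask (Pow A)"
    by (rule inj_onI) (metis PowD assms bit_bitmask_iff finite_subset subsetI subset_antisym)
  ultimately show ?thesis using card_image card_Pow[OF assms] by metis
qed

section \<open>Pauli operators and expectation values\<close>

lemma pauli_op_carrier: "pauli_op N k a b \<in> carrier_mat (2^N) (2^N)"
  unfolding pauli_op_def by simp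

lemma dim_pauli_op [simp]: "dim_row (pauli_op N k a b) = 2^N" "dim_col (pauli_op N k a b) = 2^N"
  unfolding pauli_op_def by simp_all

lemma pauli_op_index:
  "r < 2^N \<Longrightarrow> c < 2^N \<Longrightarrow>
   pauli_op N k a b $$ (r, c) = (if r = xor c a then \<i>^k * walsh N b c else 0)"
  unfolding pauli_op_def walsh_def by simp

lemma pauli_op_mult_vec_index:
  assumes "\<phi> \<in> carrier_vec (2^N)" "a < 2^N" "r < 2^N"
  shows "(pauli_op N k a b *\<^sub>v \<phi>) $ r = \<i>^k * walsh N b (xor r a) * \<phi> $ (xor r a)"
proof -
  have "(pauli_op N k a b *\<^sub>v \<phi>) $ r = (\<Sum>c\<in>{0..<2^N}. pauli_op N k a b $$ (r, c) * \<phi> $ c)"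
    using assms by (simp add: scalar_prod_def)
  also have "\<dots> = (\<Sum>c\<in>{0..<2^N}. if c = xor r a then \<i>^k * walsh N b c * \<phi> $ c else 0)"
    using assms by (intro sum.cong) (auto simp: pauli_op_index xor_eq_iff_eq_xor)
  also have "\<dots> = \<i>^k * walsh N b (xor r a) * \<phi> $ (xor r a)"
    using assms xor_less_exp by (simp add: sum.delta')
  finally show ?thesis .
qed

lemma pauli_op_phase_cong: "\<i>^k = \<i>^k' \<Longrightarrow> pauli_op N k a b = pauli_op N k' a b"
  by (simp only: pauli_op_def)

lemma pauli_op_0_inj:
  assumes "a < 2^N" "b < 2^N" "a' < 2^N" "b' < 2^N" and eq: "pauli_op N 0 a b = pauli_op N 0 a' b'"
  shows "a = a'" "b = b'"
proof -
  have "pauli_op N 0 a' b' $$ (a, 0) \<noteq> 0"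
    using assms(1) by (simp flip: eq add: pauli_op_index)
  then show "a = a'" using assms(1) by (simp add: pauli_op_index split: if_splits)
  have "bit b t = bit b' t" for t
  proof (cases "t < N")
    case True
    then have "pauli_op N 0 a b $$ (xor (2^t) a, 2^t) = pauli_op N 0 a' b' $$ (xor (2^t) a, 2^t)"
      by (simp only: eq)
    then have "walsh N b (2^t) = walsh N b' (2^t)"
      using True assms \<open>a = a'\<close> by (simp add: pauli_op_index xor_less_exp)
    then show ?thesis
      using True by (auto simp: walsh_commute[of N _ "2^t"] walsh_exp_left split: if_splits)
  qed (use bit_less_exp_imp_less assms(2,4) in blast)
  then show "b = b'" by (rule bit_eqI)
qed

lemma Zop_mult_Zop: "Zop N i * Zop N j = pauli_op N 0 0 (xor (2^i) (2^j))"
proof (rule eq_matI)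
  fix r c assume "r < dim_row (pauli_op N 0 0 (xor (2^i) (2^j)))" "c < dim_col (pauli_op N 0 0 (xor (2^i) (2^j)))"
  then have rc: "r < 2^N" "c < 2^N" by simp_all
  have "(Zop N i * Zop N j) $$ (r, c) = (\<Sum>m\<in>{0..<2^N}. Zop N i $$ (r, m) * Zop N j $$ (m, c))"
    using rc by (simp add: Zop_def scalar_prod_def)
  also have "\<dots> = (\<Sum>m\<in>{0..<2^N}. if m = r then walsh N (2^i) r * Zop N j $$ (r, c) else 0)"
    using rc by (intro sum.cong refl) (auto simp: Zop_def pauli_op_index)
  also have "\<dots> = pauli_op N 0 0 (xor (2^i) (2^j)) $$ (r, c)"
    using rc by (simp add: Zop_def pauli_op_index walsh_xor_left)
  finally show "(Zop N i * Zop N j) $$ (r, c) = pauli_op N 0 0 (xor (2^i) (2^j)) $$ (r, c)" .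
qed (simp_all add: Zop_def)

lemma expect_eq_sum:
  "\<phi> \<in> carrier_vec n \<Longrightarrow> expect M \<phi> = (\<Sum>r\<in>{0..<n}. (M *\<^sub>v \<phi>) $ r * cnj (\<phi> $ r))"
  unfolding expect_def scalar_prod_def by (simp del: index_mult_mat_vec)

lemma expect_eq_bilinear:
  assumes "M \<in> carrier_mat n n" "\<phi> \<in> carrier_vec n"
  shows "expect M \<phi> = (\<Sum>r\<in>{0..<n}. \<Sum>c\<in>{0..<n}. M $$ (r, c) * (\<phi> $ c * cnj (\<phi> $ r)))"
  unfolding expect_eq_sum[OF assms(2)] using assms
  by (intro sum.cong refl) (simp add: scalar_prod_def sum_distrib_left sum_distrib_right mult_ac)

definition pauli_expect :: "nat \<Rightarrow> complex vec \<Rightarrow> nat \<Rightarrow> nat \<Rightarrow> complex" where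
  "pauli_expect N \<phi> a b = (\<Sum>r\<in>{0..<2^N}. walsh N b (xor r a) * \<phi> $ (xor r a) * cnj (\<phi> $ r))"

lemma expect_pauli_op:
  assumes "\<phi> \<in> carrier_vec (2^N)" "a < 2^N"
  shows "expect (pauli_op N 0 a b) \<phi> = pauli_expect N \<phi> a b"
  unfolding expect_eq_sum[OF assms(1)] pauli_expect_def using assms
  by (intro sum.cong refl) (simp add: pauli_op_mult_vec_index del: index_mult_mat_vec)

lemma pauli_expect_shifted:
  assumes "a < 2^N"
  shows "pauli_expect N \<phi> a b = (\<Sum>c\<in>{0..<2^N}. walsh N b c * (\<phi> $ c * cnj (\<phi> $ (xor c a))))"
  unfolding pauli_expect_def
  using sum_reindex_xor[OF assms, of "\<lambda>c. walsh N b c * (\<phi> $ c * cnj (\<phi> $ (xor c a)))"]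
  by (simp add: xor.assoc mult.assoc)

lemma cnj_pauli_expect_X:
  assumes "a < 2^N"
  shows "cnj (pauli_expect N \<phi> a 0) = pauli_expect N \<phi> a 0"
proof -
  have "cnj (pauli_expect N \<phi> a 0) = (\<Sum>c\<in>{0..<2^N}. cnj (\<phi> $ c) * \<phi> $ (xor c a))"
    unfolding pauli_expect_shifted[OF assms] by (simp add: cnj_sum)
  also have "\<dots> = pauli_expect N \<phi> a 0"
    unfolding pauli_expect_def by (intro sum.cong refl) (simp add: mult_ac)
  finally show ?thesis .
qed

lemma cnj_pauli_expect_Z: "cnj (pauli_expect N \<phi> 0 b) = pauli_expect N \<phi> 0 b"
  unfolding pauli_expect_def by (simp add: mult_ac)

lemma sum_pauli_expect_sq_fixed_X:
  assumes "a < 2^N"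
  shows "(\<Sum>b\<in>{0..<(2::nat)^N}. pauli_expect N \<phi> a b * cnj (pauli_expect N \<phi> a b))
       = 2^N * (\<Sum>c\<in>{0..<2^N}. (\<phi> $ c * cnj (\<phi> $ c)) * (\<phi> $ (xor c a) * cnj (\<phi> $ (xor c a))))"
proof -
  define f where "f c = \<phi> $ c * cnj (\<phi> $ (xor c a))" for c
  let ?B = "{0..<(2::nat)^N}"
  have "pauli_expect N \<phi> a b * cnj (pauli_expect N \<phi> a b)
      = (\<Sum>c\<in>?B. \<Sum>c'\<in>?B. walsh N b (xor c c') * (f c * cnj (f c')))" for b
    unfolding pauli_expect_shifted[OF assms] f_def[symmetric] cnj_sum sum_product
    by (intro sum.cong refl) (simp add: walsh_xor_right)
  then have "(\<Sum>b\<in>?B. pauli_expect N \<phi> a b * cnj (pauli_expect N \<phi> a b))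
      = (\<Sum>b\<in>?B. \<Sum>c\<in>?B. \<Sum>c'\<in>?B. walsh N b (xor c c') * (f c * cnj (f c')))"
    by simp
  also have "\<dots> = (\<Sum>c\<in>?B. \<Sum>c'\<in>?B. \<Sum>b\<in>?B. walsh N b (xor c c') * (f c * cnj (f c')))"
    by (subst sum.swap) (subst (2) sum.swap, rule refl)
  also have "\<dots> = (\<Sum>c\<in>?B. \<Sum>c'\<in>?B. (\<Sum>b\<in>?B. walsh N b (xor c c')) * (f c * cnj (f c')))"
    by (simp add: sum_distrib_right)
  also have "\<dots> = (\<Sum>c\<in>?B. \<Sum>c'\<in>?B. if c' = c then 2^N * (f c * cnj (f c)) else 0)"
    by (intro sum.cong refl) (auto simp: sum_walsh xor_less_exp)
  also have "\<dots> = 2^N * (\<Sum>c\<in>?B. (\<phi> $ c * cnj (\<phi> $ c)) * (\<phi> $ (xor c a) * cnj (\<phi> $ (xor c a))))"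
    unfolding f_def by (simp add: sum.delta sum_distrib_left mult_ac)
  finally show ?thesis .
qed

section \<open>Stabilizer states and their Pauli expectation values\<close>

definition stabilizing_pairs :: "nat \<Rightarrow> complex vec \<Rightarrow> (nat \<times> nat) set" where
  "stabilizing_pairs N \<phi> =
     {(a, b). a < 2^N \<and> b < 2^N \<and> (\<exists>k<4. pauli_op N k a b *\<^sub>v \<phi> = \<phi>)}"

lemma stabilizing_pairs_subset: "stabilizing_pairs N \<phi> \<subseteq> {0..<2^N} \<times> {0..<2^N}"
  unfolding stabilizing_pairs_def by auto

lemma finite_stabilizing_pairs [simp]: "finite (stabilizing_pairs N \<phi>)"
  using stabilizing_pairs_subset finite_subset by blast

locale qubit_state =
  fixes N :: nat and \<phi> :: "complex vec"
  assumes carrier: "\<phi> \<in> carrier_vec (2^N)" and normalized: "\<phi> \<bullet>c \<phi> = 1"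
begin

lemma sum_sq_entries: "(\<Sum>r\<in>{0..<2^N}. \<phi> $ r * cnj (\<phi> $ r)) = 1"
  using normalized carrier by (simp add: scalar_prod_def)

lemma ex_nonzero_entry: "\<exists>r<2^N. \<phi> $ r \<noteq> 0"
proof (rule ccontr)
  assume "\<not> ?thesis"
  then have "(\<Sum>r\<in>{0..<2^N}. \<phi> $ r * cnj (\<phi> $ r)) = 0" by (intro sum.neutral) auto
  then show False using sum_sq_entries by simp
qed

lemma parseval: "(\<Sum>(a, b)\<in>{0..<(2::nat)^N} \<times> {0..<2^N}. (cmod (pauli_expect N \<phi> a b))^2) = 2^N"
proof -
  define p where "p c = \<phi> $ c * cnj (\<phi> $ c)" for c
  let ?B = "{0..<(2::nat)^N}"
  have p_sum: "(\<Sum>c\<in>?B. p c) = 1"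
    unfolding p_def by (rule sum_sq_entries)
  have "complex_of_real (\<Sum>(a, b)\<in>?B \<times> ?B. (cmod (pauli_expect N \<phi> a b))^2)
      = (\<Sum>a\<in>?B. \<Sum>b\<in>?B. pauli_expect N \<phi> a b * cnj (pauli_expect N \<phi> a b))"
    unfolding of_real_sum sum.cartesian_product
    by (intro sum.cong refl) (clarsimp simp flip: complex_norm_square)
  also have "\<dots> = (\<Sum>a\<in>?B. 2^N * (\<Sum>c\<in>?B. p c * p (xor c a)))"
    unfolding p_def by (intro sum.cong refl) (simp add: sum_pauli_expect_sq_fixed_X)
  also have "\<dots> = 2^N * (\<Sum>a\<in>?B. \<Sum>c\<in>?B. p c * p (xor a c))"
    by (simp add: sum_distrib_left xor.commute)
  also have "\<dots> = 2^N * (\<Sum>c\<in>?B. p c * (\<Sum>a\<in>?B. p (xor a c)))"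
    by (subst sum.swap) (simp add: sum_distrib_left)
  also have "\<dots> = 2^N * (\<Sum>c\<in>?B. p c)"
    using sum_reindex_xor[of _ N p] p_sum by simp
  finally have "complex_of_real (\<Sum>(a, b)\<in>?B \<times> ?B. (cmod (pauli_expect N \<phi> a b))^2) = complex_of_real (2^N)"
    using p_sum by simp
  then show ?thesis by (simp only: of_real_eq_iff)
qed

lemma stabilizes_index:
  assumes "pauli_op N k a b *\<^sub>v \<phi> = \<phi>" "a < 2^N" "r < 2^N"
  shows "\<i>^k * walsh N b (xor r a) * \<phi> $ (xor r a) = \<phi> $ r"
  using pauli_op_mult_vec_index[OF carrier assms(2,3), of k b] assms(1) by simp

lemma pauli_expect_stabilizing:
  assumes "pauli_op N k a b *\<^sub>v \<phi> = \<phi>" "a < 2^N"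
  shows "pauli_expect N \<phi> a b = (-\<i>)^k"
proof -
  have "walsh N b (xor r a) * \<phi> $ (xor r a) = (-\<i>)^k * \<phi> $ r" if "r < 2^N" for r
  proof -
    have "(-\<i>)^k * \<i>^k = 1" by (simp flip: power_mult_distrib)
    then show ?thesis
      using stabilizes_index[OF assms that] by (metis mult.assoc mult_1)
  qed
  then have "pauli_expect N \<phi> a b = (\<Sum>r\<in>{0..<2^N}. (-\<i>)^k * (\<phi> $ r * cnj (\<phi> $ r)))"
    unfolding pauli_expect_def by (intro sum.cong refl) (simp add: mult_ac)
  then show ?thesis using sum_sq_entries by (simp flip: sum_distrib_left)
qed

lemma stabilizing_phase_unique:
  assumes "pauli_op N k a b *\<^sub>v \<phi> = \<phi>" "pauli_op N k' a b *\<^sub>v \<phi> = \<phi>" "a < 2^N"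
  shows "pauli_op N k a b = pauli_op N k' a b"
proof (rule pauli_op_phase_cong)
  have "cnj ((-\<i>)^k) = cnj ((-\<i>)^k')"
    using pauli_expect_stabilizing[OF assms(1,3)] pauli_expect_stabilizing[OF assms(2,3)] by simp
  then show "\<i>^k = \<i>^k'" by simp
qed

lemma cmod_pauli_expect_stabilizing:
  assumes "(a, b) \<in> stabilizing_pairs N \<phi>"
  shows "cmod (pauli_expect N \<phi> a b) = 1"
proof -
  obtain k where "pauli_op N k a b *\<^sub>v \<phi> = \<phi>" "a < 2^N"
    using assms unfolding stabilizing_pairs_def by auto
  then show ?thesis by (simp add: pauli_expect_stabilizing norm_power)
qed

lemma card_stabilizing_pairs_le: "card (stabilizing_pairs N \<phi>) \<le> 2^N"
proof -
  let ?q = "\<lambda>(a, b). (cmod (pauli_expect N \<phi> a b))^2"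
  have "real (card (stabilizing_pairs N \<phi>)) = (\<Sum>p\<in>stabilizing_pairs N \<phi>. ?q p)"
    using cmod_pauli_expect_stabilizing by (simp add: case_prod_beta)
  also have "\<dots> \<le> (\<Sum>p\<in>{0..<(2::nat)^N} \<times> {0..<2^N}. ?q p)"
    by (rule sum_mono2) (use stabilizing_pairs_subset in auto)
  also have "\<dots> = 2^N" using parseval .
  finally show ?thesis by (simp flip: of_nat_le_iff)
qed

lemma pauli_expect_eq_0_if_not_stabilizing:
  assumes big: "card (stabilizing_pairs N \<phi>) \<ge> 2^N"
    and ab: "a < 2^N" "b < 2^N" "(a, b) \<notin> stabilizing_pairs N \<phi>"
  shows "pauli_expect N \<phi> a b = 0"
proof -
  \<comment> \<open>The stabilizing pairs alone already exhaust the Parseval sum.\<close>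
  let ?q = "\<lambda>(a, b). (cmod (pauli_expect N \<phi> a b))^2"
  let ?R = "{0..<(2::nat)^N} \<times> {0..<2^N}"
  have "real (card (stabilizing_pairs N \<phi>)) = (\<Sum>p\<in>stabilizing_pairs N \<phi>. ?q p)"
    using cmod_pauli_expect_stabilizing by (simp add: case_prod_beta)
  moreover have "(\<Sum>p\<in>?R. ?q p) = (\<Sum>p\<in>?R - stabilizing_pairs N \<phi>. ?q p) + (\<Sum>p\<in>stabilizing_pairs N \<phi>. ?q p)"
    using sum.subset_diff[OF stabilizing_pairs_subset] by simp
  moreover have "real (card (stabilizing_pairs N \<phi>)) \<ge> 2^N"
    using big by (simp flip: of_nat_le_iff)
  ultimately have "(\<Sum>p\<in>?R - stabilizing_pairs N \<phi>. ?q p) \<le> 0" using parseval by linarith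
  moreover have "(cmod (pauli_expect N \<phi> a b))^2 \<le> (\<Sum>p\<in>?R - stabilizing_pairs N \<phi>. ?q p)"
    using member_le_sum[where i="(a, b)" and A="?R - stabilizing_pairs N \<phi>" and f="?q"] ab by auto
  ultimately have "(cmod (pauli_expect N \<phi> a b))^2 \<le> 0" by linarith
  then show ?thesis by simp
qed

lemma card_stab_group_le: "card (stab_group N \<phi>) \<le> card (stabilizing_pairs N \<phi>)"
  and finite_stab_group: "finite (stab_group N \<phi>)"
proof -
  define phase where "phase a b = (SOME k. k < 4 \<and> pauli_op N k a b *\<^sub>v \<phi> = \<phi>)" for a b
  have sub: "stab_group N \<phi> \<subseteq> (\<lambda>(a, b). pauli_op N (phase a b) a b) ` stabilizing_pairs N \<phi>"
  proof
    fix P assume "P \<in> stab_group N \<phi>"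
    then obtain k a b where P: "P = pauli_op N k a b" "k < 4" "a < 2^N" "b < 2^N" "P *\<^sub>v \<phi> = \<phi>"
      unfolding stab_group_def pauli_group_def by auto
    then have "\<exists>k. k < 4 \<and> pauli_op N k a b *\<^sub>v \<phi> = \<phi>" by blast
    then have "pauli_op N (phase a b) a b *\<^sub>v \<phi> = \<phi>"
      unfolding phase_def by (rule someI2_ex) blast
    then have "P = pauli_op N (phase a b) a b"
      using stabilizing_phase_unique[where k=k and k'="phase a b"] P by simp
    moreover have "(a, b) \<in> stabilizing_pairs N \<phi>"
      using P unfolding stabilizing_pairs_def by auto
    ultimately show "P \<in> (\<lambda>(a, b). pauli_op N (phase a b) a b) ` stabilizing_pairs N \<phi>"
      by force
  qed
  show "card (stab_group N \<phi>) \<le> card (stabilizing_pairs N \<phi>)"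
    using surj_card_le[OF finite_stabilizing_pairs sub] .
  show "finite (stab_group N \<phi>)"
    using finite_surj[OF finite_stabilizing_pairs sub] .
qed

lemma not_stabilizing_anticommuting:
  assumes "(x, 0) \<in> stabilizing_pairs N \<phi>" "(0, m) \<in> stabilizing_pairs N \<phi>"
  shows "walsh N m x \<noteq> -1"
proof
  assume anti: "walsh N m x = -1"
  obtain k1 where k1: "pauli_op N k1 x 0 *\<^sub>v \<phi> = \<phi>" and x: "x < 2^N"
    using assms(1) unfolding stabilizing_pairs_def by auto
  obtain k2 where k2: "pauli_op N k2 0 m *\<^sub>v \<phi> = \<phi>"
    using assms(2) unfolding stabilizing_pairs_def by auto
  obtain r where r: "r < 2^N" "\<phi> $ r \<noteq> 0" using ex_nonzero_entry by blast
  have Z_phase: "\<i>^k2 * walsh N m s = 1" if "s < 2^N" "\<phi> $ s \<noteq> 0" for s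
    using stabilizes_index[OF k2 _ that(1)] that(2) by simp
  have "\<phi> $ (xor r x) = \<i>^k1 * \<phi> $ r"
    using stabilizes_index[OF k1 x, of "xor r x"] r x by (simp add: xor_less_exp xor.assoc)
  then have "\<i>^k2 * walsh N m (xor r x) = 1"
    using r x by (intro Z_phase) (auto simp: xor_less_exp)
  moreover have "walsh N m (xor r x) = - walsh N m r"
    using anti by (simp add: walsh_xor_right)
  ultimately show False using Z_phase[OF r] by simp
qed

end

lemma stabilizer_state_imp_qubit_state: "stabilizer_state N \<phi> \<Longrightarrow> qubit_state N \<phi>"
  unfolding stabilizer_state_def qubit_state_def by simp

lemma card_stabilizing_pairs_stabilizer_state:
  assumes "stabilizer_state N \<phi>"
  shows "card (stabilizing_pairs N \<phi>) = 2^N"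
proof -
  interpret qubit_state N \<phi> using assms by (rule stabilizer_state_imp_qubit_state)
  show ?thesis
    using assms card_stab_group_le card_stabilizing_pairs_le unfolding stabilizer_state_def by simp
qed

lemma pauli_expect_stabilizer_state_cases:
  assumes "stabilizer_state N \<phi>" "a < 2^N" "b < 2^N"
  shows "pauli_expect N \<phi> a b = 0
      \<or> (a, b) \<in> stabilizing_pairs N \<phi> \<and> cmod (pauli_expect N \<phi> a b) = 1"
proof -
  interpret qubit_state N \<phi> using assms(1) by (rule stabilizer_state_imp_qubit_state)
  show ?thesis
    using pauli_expect_eq_0_if_not_stabilizing cmod_pauli_expect_stabilizing
      card_stabilizing_pairs_stabilizer_state[OF assms(1)] assms(2,3) by auto
qed

section \<open>The Ising energy of a stabilizer state\<close>

lemma of_real_Re_if_cnj_eq: "cnj z = z \<Longrightarrow> complex_of_real (Re z) = z"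
  by (metis Reals_cnj_iff of_real_Re)

lemma sum_sum_times_sum_swap:
  fixes f :: "_ \<Rightarrow> _ \<Rightarrow> _ \<Rightarrow> 'a :: comm_semiring_0"
  shows "(\<Sum>r\<in>R. \<Sum>c\<in>C. (\<Sum>e\<in>E. f e r c) * w r c) = (\<Sum>e\<in>E. \<Sum>r\<in>R. \<Sum>c\<in>C. f e r c * w r c)"
proof -
  have "(\<Sum>r\<in>R. \<Sum>c\<in>C. (\<Sum>e\<in>E. f e r c) * w r c) = (\<Sum>r\<in>R. \<Sum>c\<in>C. \<Sum>e\<in>E. f e r c * w r c)"
    by (simp add: sum_distrib_right)
  also have "\<dots> = (\<Sum>r\<in>R. \<Sum>e\<in>E. \<Sum>c\<in>C. f e r c * w r c)"
    by (rule sum.cong[OF refl]) (rule sum.swap)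
  also have "\<dots> = (\<Sum>e\<in>E. \<Sum>r\<in>R. \<Sum>c\<in>C. f e r c * w r c)"
    by (rule sum.swap)
  finally show ?thesis .
qed

lemma simple_graph_edge: "simple_graph N E \<Longrightarrow> (i, j) \<in> E \<Longrightarrow> i < N \<and> j < N \<and> i \<noteq> j"
  unfolding simple_graph_def by auto

lemma simple_graph_finite: "simple_graph N E \<Longrightarrow> finite E"
  by (rule finite_subset[of _ "{0..<N} \<times> {0..<N}"]) (auto dest: simple_graph_edge)

lemma card_Diff_vertices: "S \<subseteq> {0..<N} \<Longrightarrow> card ({0..<N} - S) = N - card S"
  by (simp add: card_Diff_subset finite_subset)

lemma sum_of_bool_edges_in:
  assumes "finite E"
  shows "(\<Sum>e\<in>E. of_bool (e \<in> edges_in E T)) = (of_nat (card (edges_in E T)) :: 'a :: semiring_1)"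
proof -
  have "(\<Sum>e\<in>E. of_bool (e \<in> edges_in E T)) = (of_nat (card (E \<inter> {e. e \<in> edges_in E T})) :: 'a)"
    by (rule sum_of_bool_eq; rule assms)
  also have "E \<inter> {e. e \<in> edges_in E T} = edges_in E T"
    unfolding edges_in_def by auto
  finally show ?thesis .
qed

lemma sum_of_bool_Diff_vertices:
  fixes N :: nat
  shows "(\<Sum>i<N. of_bool (i \<in> {0..<N} - T)) = (of_nat (card ({0..<N} - T)) :: 'a :: semiring_1)"
proof -
  have "(\<Sum>i<N. of_bool (i \<in> {0..<N} - T)) = (of_nat (card ({..<N} \<inter> {i. i \<in> {0..<N} - T})) :: 'a)"
    by (rule sum_of_bool_eq; simp)
  also have "{..<N} \<inter> {i. i \<in> {0..<N} - T} = {0..<N} - T"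
    by auto
  finally show ?thesis .
qed

lemma expect_ising_H:
  assumes E: "simple_graph N E" and \<phi>: "\<phi> \<in> carrier_vec (2^N)"
  shows "expect (ising_H N E g) \<phi>
    = - (\<Sum>(i, j)\<in>E. pauli_expect N \<phi> 0 (xor (2^i) (2^j)))
      - complex_of_real g * (\<Sum>i<N. pauli_expect N \<phi> (2^i) 0)"
proof -
  let ?w = "\<lambda>r c. \<phi> $ c * cnj (\<phi> $ r)"
  let ?R = "{0..<(2::nat)^N}"
  let ?z = "\<lambda>e r c. (case e of (i, j) \<Rightarrow> (Zop N i * Zop N j) $$ (r, c))"
  let ?x = "\<lambda>i r c. Xop N i $$ (r, c)"
  have bilinear: "expect M \<phi> = (\<Sum>r\<in>?R. \<Sum>c\<in>?R. M $$ (r, c) * ?w r c)"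
    if "M \<in> carrier_mat (2^N) (2^N)" for M
    using expect_eq_bilinear[OF that \<phi>] .
  have "expect (ising_H N E g) \<phi>
      = (\<Sum>r\<in>?R. \<Sum>c\<in>?R. (- (\<Sum>e\<in>E. ?z e r c) - complex_of_real g * (\<Sum>i<N. ?x i r c)) * ?w r c)"
    by (subst bilinear) (auto simp: ising_H_def case_prod_beta intro!: sum.cong)
  also have "\<dots> = - (\<Sum>r\<in>?R. \<Sum>c\<in>?R. (\<Sum>e\<in>E. ?z e r c) * ?w r c)
      - complex_of_real g * (\<Sum>r\<in>?R. \<Sum>c\<in>?R. (\<Sum>i<N. ?x i r c) * ?w r c)"
    by (simp add: algebra_simps sum_subtractf sum_negf sum_distrib_left)
  also have "\<dots> = - (\<Sum>e\<in>E. \<Sum>r\<in>?R. \<Sum>c\<in>?R. ?z e r c * ?w r c)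
      - complex_of_real g * (\<Sum>i<N. \<Sum>r\<in>?R. \<Sum>c\<in>?R. ?x i r c * ?w r c)"
    by (simp only: sum_sum_times_sum_swap)
  also have "(\<Sum>e\<in>E. \<Sum>r\<in>?R. \<Sum>c\<in>?R. ?z e r c * ?w r c)
      = (\<Sum>(i, j)\<in>E. pauli_expect N \<phi> 0 (xor (2^i) (2^j)))"
    by (intro sum.cong refl)
       (auto simp: bilinear[symmetric] Zop_mult_Zop pauli_op_carrier expect_pauli_op[OF \<phi>])
  also have "(\<Sum>i<N. \<Sum>r\<in>?R. \<Sum>c\<in>?R. ?x i r c * ?w r c) = (\<Sum>i<N. pauli_expect N \<phi> (2^i) 0)"
    by (intro sum.cong refl)
       (auto simp: bilinear[symmetric] Xop_def pauli_op_carrier expect_pauli_op[OF \<phi>])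
  finally show ?thesis .
qed

lemma pauli_expect_ZZ_eq_0:
  assumes \<phi>: "stabilizer_state N \<phi>" and ij: "i < N" "j < N" "i \<noteq> j"
    and X: "pauli_expect N \<phi> (2^i) 0 \<noteq> 0"
  shows "pauli_expect N \<phi> 0 (xor (2^i) (2^j)) = 0"
proof (rule ccontr)
  let ?m = "xor ((2::nat)^i) (2^j)"
  interpret qubit_state N \<phi> using \<phi> by (rule stabilizer_state_imp_qubit_state)
  assume "pauli_expect N \<phi> 0 ?m \<noteq> 0"
  moreover have "?m < 2^N" using ij by (simp add: xor_less_exp)
  ultimately have "(0, ?m) \<in> stabilizing_pairs N \<phi>"
    using pauli_expect_stabilizer_state_cases[OF \<phi>, of 0 ?m] by auto
  moreover have "(2::nat)^i < 2^N" using ij by simp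
  then have "(2^i, 0) \<in> stabilizing_pairs N \<phi>"
    using pauli_expect_stabilizer_state_cases[OF \<phi>, of "2^i" 0] X by auto
  moreover have "walsh N ?m (2^i) = -1"
    using ij by (simp add: walsh_commute[of N ?m] walsh_exp_left bit_xor_iff bit_exp_iff)
  ultimately show False using not_stabilizing_anticommuting by blast
qed

lemma Re_pauli_expect_le_1:
  assumes "stabilizer_state N \<phi>" "a < 2^N" "b < 2^N"
  shows "Re (pauli_expect N \<phi> a b) \<le> 1"
  using pauli_expect_stabilizer_state_cases[OF assms] abs_Re_le_cmod[of "pauli_expect N \<phi> a b"]
  by auto

lemma expect_ising_H_real:
  assumes E: "simple_graph N E" and \<phi>: "\<phi> \<in> carrier_vec (2^N)"
  shows "expect (ising_H N E g) \<phi> = complex_of_real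
    (- (\<Sum>(i, j)\<in>E. Re (pauli_expect N \<phi> 0 (xor (2^i) (2^j))))
     - g * (\<Sum>i<N. Re (pauli_expect N \<phi> (2^i) 0)))"
proof -
  have "pauli_expect N \<phi> (2^i) 0 = complex_of_real (Re (pauli_expect N \<phi> (2^i) 0))" if "i < N" for i
    using that of_real_Re_if_cnj_eq[OF cnj_pauli_expect_X, of "2^i" N] by simp
  then show ?thesis
    unfolding expect_ising_H[OF E \<phi>]
    using of_real_Re_if_cnj_eq[OF cnj_pauli_expect_Z] by (simp add: case_prod_beta)
qed

definition zero_X_qubits :: "nat \<Rightarrow> complex vec \<Rightarrow> nat set" where
  "zero_X_qubits N \<phi> = {i\<in>{0..<N}. pauli_expect N \<phi> (2^i) 0 = 0}"

lemma sum_Re_ZZ_le_card_edges_in: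
  assumes E: "simple_graph N E" and \<phi>: "stabilizer_state N \<phi>"
  shows "(\<Sum>(i, j)\<in>E. Re (pauli_expect N \<phi> 0 (xor (2^i) (2^j))))
    \<le> real (card (edges_in E (zero_X_qubits N \<phi>)))"
proof -
  let ?T = "zero_X_qubits N \<phi>"
  have term_le: "Re (pauli_expect N \<phi> 0 (xor (2^i) (2^j))) \<le> of_bool ((i, j) \<in> edges_in E ?T)"
    if ij: "(i, j) \<in> E" for i j
  proof (cases "i \<in> ?T \<and> j \<in> ?T")
    case True
    then show ?thesis
      using Re_pauli_expect_le_1[OF \<phi>] simple_graph_edge[OF E ij] ij
      by (simp add: edges_in_def xor_less_exp)
  next
    case False
    then have "pauli_expect N \<phi> (2^i) 0 \<noteq> 0 \<or> pauli_expect N \<phi> (2^j) 0 \<noteq> 0"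
      using simple_graph_edge[OF E ij] unfolding zero_X_qubits_def by auto
    then have "pauli_expect N \<phi> 0 (xor (2^i) (2^j)) = 0"
      using pauli_expect_ZZ_eq_0[OF \<phi>, of i j] pauli_expect_ZZ_eq_0[OF \<phi>, of j i]
        simple_graph_edge[OF E ij]
      by (auto simp: xor.commute[of "2^i"])
    then show ?thesis by simp
  qed
  have "(\<Sum>(i, j)\<in>E. Re (pauli_expect N \<phi> 0 (xor (2^i) (2^j)))) \<le> (\<Sum>e\<in>E. of_bool (e \<in> edges_in E ?T))"
  proof (rule sum_mono, clarify)
    fix i j assume "(i, j) \<in> E"
    then show "Re (pauli_expect N \<phi> 0 (xor (2^i) (2^j))) \<le> of_bool ((i, j) \<in> edges_in E ?T)"
      by (rule term_le)
  qed
  also have "\<dots> = real (card (edges_in E ?T))"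
    by (rule sum_of_bool_edges_in[OF simple_graph_finite[OF E]])
  finally show ?thesis .
qed

lemma sum_Re_X_le_card:
  assumes \<phi>: "stabilizer_state N \<phi>"
  shows "(\<Sum>i<N. Re (pauli_expect N \<phi> (2^i) 0)) \<le> real (card ({0..<N} - zero_X_qubits N \<phi>))"
proof -
  have "(\<Sum>i<N. Re (pauli_expect N \<phi> (2^i) 0)) \<le> (\<Sum>i<N. of_bool (i \<in> {0..<N} - zero_X_qubits N \<phi>))"
    using Re_pauli_expect_le_1[OF \<phi>] unfolding zero_X_qubits_def by (intro sum_mono) auto
  also have "\<dots> = real (card ({0..<N} - zero_X_qubits N \<phi>))"
    by (rule sum_of_bool_Diff_vertices)
  finally show ?thesis .
qed

lemma stabilizer_energy_ge_cost:
  assumes E: "simple_graph N E" and g: "g \<ge> 0" and \<phi>: "stabilizer_state N \<phi>"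
  obtains x T where "expect (ising_H N E g) \<phi> = complex_of_real x"
    and "T \<subseteq> {0..<N}" and "cost_f N E g T \<le> x"
proof
  show "expect (ising_H N E g) \<phi> = complex_of_real
    (- (\<Sum>(i, j)\<in>E. Re (pauli_expect N \<phi> 0 (xor (2^i) (2^j))))
     - g * (\<Sum>i<N. Re (pauli_expect N \<phi> (2^i) 0)))"
    using expect_ising_H_real[OF E qubit_state.carrier[OF stabilizer_state_imp_qubit_state[OF \<phi>]]] .
  show "zero_X_qubits N \<phi> \<subseteq> {0..<N}"
    unfolding zero_X_qubits_def by auto
  show "cost_f N E g (zero_X_qubits N \<phi>)
    \<le> - (\<Sum>(i, j)\<in>E. Re (pauli_expect N \<phi> 0 (xor (2^i) (2^j))))
      - g * (\<Sum>i<N. Re (pauli_expect N \<phi> (2^i) 0))"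
    using sum_Re_ZZ_le_card_edges_in[OF E \<phi>] mult_left_mono[OF sum_Re_X_le_card[OF \<phi>] g]
    unfolding cost_f_def by linarith
qed

section \<open>A product stabilizer state attaining the bound\<close>

(* The product state with |0> on the qubits of T and |+> on the others. *)
definition zero_plus_state :: "nat \<Rightarrow> nat set \<Rightarrow> complex vec" where
  "zero_plus_state N T = vec (2^N) (\<lambda>c.
     if c \<in> bits_within ({0..<N} - T) then complex_of_real (1 / sqrt (2 ^ card ({0..<N} - T))) else 0)"

context
  fixes N :: nat and T :: "nat set"
  assumes T: "T \<subseteq> {0..<N}"
begin

lemma card_bits_within_times: "card (bits_within ({0..<N} - T) \<times> bits_within T) = 2^N"
proof -
  have "card T \<le> N" using card_mono[OF _ T] by simp
  then have "card ({0..<N} - T) + card T = N"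
    by (simp add: card_Diff_vertices[OF T])
  then show ?thesis
    using T by (simp add: card_cartesian_product card_bits_within finite_subset flip: power_add)
qed

lemma bits_within_times_less:
  "(a, b) \<in> bits_within ({0..<N} - T) \<times> bits_within T \<Longrightarrow> a < 2^N \<and> b < 2^N"
  using T bits_within_less_exp[of "{0..<N} - T" N a] bits_within_less_exp[of T N b] by auto

lemma qubit_state_zero_plus_state: "qubit_state N (zero_plus_state N T)"
proof
  let ?U = "{0..<N} - T"
  show carrier: "zero_plus_state N T \<in> carrier_vec (2^N)"
    by (simp add: zero_plus_state_def)
  have "zero_plus_state N T \<bullet>c zero_plus_state N T
      = (\<Sum>r\<in>{0..<2^N}. zero_plus_state N T $ r * cnj (zero_plus_state N T $ r))"
    using carrier by (simp add: scalar_prod_def)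
  also have "\<dots> = (\<Sum>r\<in>{0..<2^N}. of_bool (r \<in> bits_within ?U) * complex_of_real (1 / 2 ^ card ?U))"
    by (intro sum.cong refl)
       (simp add: zero_plus_state_def power_divide real_sqrt_mult_self flip: of_real_mult)
  also have "\<dots> = (\<Sum>r\<in>{0..<2^N}. of_bool (r \<in> bits_within ?U)) * complex_of_real (1 / 2 ^ card ?U)"
    by (rule sum_distrib_right[symmetric])
  also have "(\<Sum>r\<in>{0..<2^N}. of_bool (r \<in> bits_within ?U)) = (of_nat (card ({0..<2^N} \<inter> {r. r \<in> bits_within ?U})) :: complex)"
    by (rule sum_of_bool_eq; simp)
  also have "{0..<2^N} \<inter> {r. r \<in> bits_within ?U} = bits_within ?U"
    using bits_within_less_exp[of ?U N] by auto
  finally show "zero_plus_state N T \<bullet>c zero_plus_state N T = 1"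
    by (simp add: card_bits_within)
qed

lemma zero_plus_state_stabilized:
  assumes a: "a \<in> bits_within ({0..<N} - T)" and b: "b \<in> bits_within T"
  shows "pauli_op N 0 a b *\<^sub>v zero_plus_state N T = zero_plus_state N T"
proof (rule eq_vecI)
  fix r assume "r < dim_vec (zero_plus_state N T)"
  then have r: "r < 2^N" by (simp add: zero_plus_state_def)
  have "a < 2^N" using bits_within_less_exp[of "{0..<N} - T" N a] a by auto
  then have ra: "xor r a < 2^N" using r by (simp add: xor_less_exp)
  have "walsh N b (xor r a) = 1" if "xor r a \<in> bits_within ({0..<N} - T)"
  proof -
    have "{t. t < N \<and> bit b t \<and> bit (xor r a) t} = {}"
      using that b unfolding bits_within_def by auto
    then have "card {t. t < N \<and> bit b t \<and> bit (xor r a) t} = 0" by (simp only: card.empty)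
    then show ?thesis unfolding walsh_def by (simp only: power_0)
  qed
  then show "(pauli_op N 0 a b *\<^sub>v zero_plus_state N T) $ r = zero_plus_state N T $ r"
    using pauli_op_mult_vec_index[OF qubit_state.carrier[OF qubit_state_zero_plus_state] \<open>a < 2^N\<close> r]
      xor_mem_bits_within_iff[OF a] r ra
    by (simp add: zero_plus_state_def)
qed (simp add: zero_plus_state_def)

lemma stabilizing_pairs_zero_plus_state:
  "stabilizing_pairs N (zero_plus_state N T) = bits_within ({0..<N} - T) \<times> bits_within T"
proof -
  interpret qubit_state N "zero_plus_state N T" by (rule qubit_state_zero_plus_state)
  have sub: "bits_within ({0..<N} - T) \<times> bits_within T \<subseteq> stabilizing_pairs N (zero_plus_state N T)"
  proof clarify
    fix a b assume ab: "a \<in> bits_within ({0..<N} - T)" "b \<in> bits_within T"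
    then have "a < 2^N \<and> b < 2^N \<and> (0::nat) < 4
        \<and> pauli_op N 0 a b *\<^sub>v zero_plus_state N T = zero_plus_state N T"
      using bits_within_times_less zero_plus_state_stabilized by simp
    then show "(a, b) \<in> stabilizing_pairs N (zero_plus_state N T)"
      unfolding stabilizing_pairs_def by blast
  qed
  then have "card (stabilizing_pairs N (zero_plus_state N T)) = 2^N"
    using card_mono[OF finite_stabilizing_pairs sub] card_stabilizing_pairs_le card_bits_within_times
    by simp
  then show ?thesis
    using card_subset_eq[OF finite_stabilizing_pairs sub] card_bits_within_times by simp
qed

lemma stabilizer_state_zero_plus_state: "stabilizer_state N (zero_plus_state N T)"
proof -
  interpret qubit_state N "zero_plus_state N T" by (rule qubit_state_zero_plus_state)
  let ?F = "bits_within ({0..<N} - T) \<times> bits_within T"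
  let ?P = "\<lambda>(a, b). pauli_op N 0 a b"
  have "?P ` ?F \<subseteq> stab_group N (zero_plus_state N T)"
  proof (rule image_subsetI, clarify)
    fix a b assume ab: "a \<in> bits_within ({0..<N} - T)" "b \<in> bits_within T"
    then have "(0::nat) < 4 \<and> a < 2^N \<and> b < 2^N" using bits_within_times_less[of a b] by simp
    then have "pauli_op N 0 a b \<in> pauli_group N" unfolding pauli_group_def by blast
    then show "pauli_op N 0 a b \<in> stab_group N (zero_plus_state N T)"
      unfolding stab_group_def using zero_plus_state_stabilized[OF ab] by simp
  qed
  then have "card (?P ` ?F) \<le> card (stab_group N (zero_plus_state N T))"
    by (rule card_mono[OF finite_stab_group])
  moreover have "inj_on ?P ?F"
  proof (rule inj_onI)
    fix p q assume pq: "p \<in> ?F" "q \<in> ?F" "?P p = ?P q"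
    obtain a b a' b' where p: "p = (a, b)" and q: "q = (a', b')" by (cases p, cases q)
    have "a < 2^N \<and> b < 2^N" "a' < 2^N \<and> b' < 2^N" using bits_within_times_less pq p q by auto
    then show "p = q" using pauli_op_0_inj[of a N b a' b'] pq(3) p q by auto
  qed
  then have "card (?P ` ?F) = 2^N"
    unfolding card_bits_within_times[symmetric] by (rule card_image)
  ultimately have "2^N \<le> card (stab_group N (zero_plus_state N T))"
    by simp
  moreover have "card (stab_group N (zero_plus_state N T)) \<le> 2^N"
    using card_stab_group_le card_stabilizing_pairs_le by (rule order_trans)
  ultimately show ?thesis
    using carrier normalized unfolding stabilizer_state_def by simp
qed

lemma pauli_expect_zero_plus_state:
  assumes "a < 2^N" "b < 2^N"
  shows "pauli_expect N (zero_plus_state N T) a b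
    = of_bool (a \<in> bits_within ({0..<N} - T) \<and> b \<in> bits_within T)"
proof -
  interpret qubit_state N "zero_plus_state N T" by (rule qubit_state_zero_plus_state)
  show ?thesis
  proof (cases "a \<in> bits_within ({0..<N} - T) \<and> b \<in> bits_within T")
    case True
    then show ?thesis
      using pauli_expect_stabilizing[OF zero_plus_state_stabilized assms(1)] by simp
  next
    case False
    then show ?thesis
      using pauli_expect_eq_0_if_not_stabilizing[OF _ assms]
        stabilizing_pairs_zero_plus_state card_bits_within_times by simp
  qed
qed

lemma expect_ising_H_zero_plus_state:
  assumes E: "simple_graph N E"
  shows "expect (ising_H N E g) (zero_plus_state N T) = complex_of_real (cost_f N E g T)"
proof -
  have ZZ: "pauli_expect N (zero_plus_state N T) 0 (xor (2^i) (2^j)) = of_bool ((i, j) \<in> edges_in E T)"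
    if "(i, j) \<in> E" for i j
  proof -
    have "i < N" "j < N" "i \<noteq> j" using simple_graph_edge[OF E that] by auto
    moreover have "xor ((2::nat)^i) (2^j) \<in> bits_within T \<longleftrightarrow> i \<in> T \<and> j \<in> T"
      using \<open>i \<noteq> j\<close> unfolding bits_within_def by (auto simp: bit_xor_iff bit_exp_iff)
    ultimately show ?thesis
      using that by (simp add: pauli_expect_zero_plus_state xor_less_exp edges_in_def)
  qed
  have "(\<Sum>(i, j)\<in>E. pauli_expect N (zero_plus_state N T) 0 (xor (2^i) (2^j)))
      = (\<Sum>e\<in>E. of_bool (e \<in> edges_in E T))"
    using ZZ by (intro sum.cong) auto
  also have "\<dots> = of_nat (card (edges_in E T))"
    by (rule sum_of_bool_edges_in[OF simple_graph_finite[OF E]])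
  moreover have "(\<Sum>i<N. pauli_expect N (zero_plus_state N T) (2^i) 0)
      = (\<Sum>i<N. of_bool (i \<in> {0..<N} - T))"
    by (intro sum.cong) (auto simp: pauli_expect_zero_plus_state)
  moreover have "\<dots> = of_nat (card ({0..<N} - T))"
    by (rule sum_of_bool_Diff_vertices)
  ultimately show ?thesis
    using expect_ising_H[OF E qubit_state.carrier[OF qubit_state_zero_plus_state]]
    unfolding cost_f_def by simp
qed

end

section \<open>The edge function\<close>

definition min_edge_energy :: "nat \<Rightarrow> (nat \<times> nat) set \<Rightarrow> real \<Rightarrow> real" where
  "min_edge_energy N E g = Min {- real (edge_fun N E n) - g * real (N - n) | n. n \<le> N}"

lemma energies_eq_image:
  "{- real (edge_fun N E n) - g * real (N - n) | n. n \<le> N}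
    = (\<lambda>n. - real (edge_fun N E n) - g * real (N - n)) ` {..N}"
  by (auto simp del: of_nat_diff)

lemma finite_edge_counts: "finite {card (edges_in E S) | S. S \<subseteq> {0..<N} \<and> card S \<le> n}"
proof -
  have "{card (edges_in E S) | S. S \<subseteq> {0..<N} \<and> card S \<le> n} \<subseteq> (\<lambda>S. card (edges_in E S)) ` Pow {0..<N}"
    by auto
  then show ?thesis using finite_subset by blast
qed

lemma card_edges_in_le_edge_fun:
  "S \<subseteq> {0..<N} \<Longrightarrow> card S \<le> n \<Longrightarrow> card (edges_in E S) \<le> edge_fun N E n"
  unfolding edge_fun_def by (rule Max_ge[OF finite_edge_counts]) blast

lemma edge_fun_attained:
  obtains S where "S \<subseteq> {0..<N}" "card S \<le> n" "card (edges_in E S) = edge_fun N E n"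
proof -
  have "edge_fun N E n \<in> {card (edges_in E S) | S. S \<subseteq> {0..<N} \<and> card S \<le> n}"
    unfolding edge_fun_def by (rule Max_in[OF finite_edge_counts]) auto
  then show ?thesis using that by auto
qed

lemma min_edge_energy_le_cost_f:
  assumes S: "S \<subseteq> {0..<N}"
  shows "min_edge_energy N E g \<le> cost_f N E g S"
proof -
  have "card S \<le> N" using card_mono[OF _ S] by simp
  then have "min_edge_energy N E g \<le> - real (edge_fun N E (card S)) - g * real (N - card S)"
    unfolding min_edge_energy_def energies_eq_image by (intro Min_le) auto
  also have "\<dots> \<le> cost_f N E g S"
    using card_edges_in_le_edge_fun[OF S order.refl, of E]
    unfolding cost_f_def card_Diff_vertices[OF S] by simp
  finally show ?thesis .
qed

lemma cost_f_attains_min_edge_energy: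
  assumes g: "g \<ge> 0"
  obtains S where "S \<subseteq> {0..<N}" "cost_f N E g S = min_edge_energy N E g"
proof -
  have "min_edge_energy N E g \<in> (\<lambda>n. - real (edge_fun N E n) - g * real (N - n)) ` {..N}"
    unfolding min_edge_energy_def energies_eq_image by (rule Min_in) auto
  then obtain n where n: "n \<le> N"
    and min_eq: "min_edge_energy N E g = - real (edge_fun N E n) - g * real (N - n)" by auto
  obtain S where S: "S \<subseteq> {0..<N}" "card S \<le> n" "card (edges_in E S) = edge_fun N E n"
    using edge_fun_attained .
  have "g * real (N - n) \<le> g * real (N - card S)"
    using S(2) n g by (intro mult_left_mono) auto
  then have "cost_f N E g S \<le> min_edge_energy N E g"
    unfolding cost_f_def card_Diff_vertices[OF S(1)] S(3) min_eq by linarith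
  then show ?thesis
    using that S(1) min_edge_energy_le_cost_f[OF S(1)] by (meson order.antisym)
qed

lemma cost_f_minimizer_n_optimal:
  assumes g: "g \<ge> 0" and V: "V \<subseteq> {0..<N}"
    and min: "\<And>S. S \<subseteq> {0..<N} \<Longrightarrow> cost_f N E g V \<le> cost_f N E g S"
  shows "n_optimal N E (card V) V"
proof -
  obtain S where S: "S \<subseteq> {0..<N}" "card S \<le> card V" "card (edges_in E S) = edge_fun N E (card V)"
    using edge_fun_attained .
  have "card V \<le> N" using card_mono[OF _ V] by simp
  then have "g * real (N - card V) \<le> g * real (N - card S)"
    using S(2) g by (intro mult_left_mono) auto
  then have "edge_fun N E (card V) \<le> card (edges_in E V)"
    using min[OF S(1)] S(3) unfolding cost_f_def card_Diff_vertices[OF V] card_Diff_vertices[OF S(1)]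
    by linarith
  then show ?thesis
    using card_edges_in_le_edge_fun[OF V order.refl, of E] V unfolding n_optimal_def by simp
qed

theorem mainTheorem6:
  fixes N :: nat and E :: "(nat \<times> nat) set" and g :: real
  assumes "simple_graph N E" and "g \<ge> 0"
  shows "(let m = Min {- real (edge_fun N E n) - g * real (N - n) | n. n \<le> N} in
            (\<exists>\<phi>. stabilizer_state N \<phi> \<and> expect (ising_H N E g) \<phi> = complex_of_real m)
          \<and> (\<forall>\<phi>. stabilizer_state N \<phi> \<longrightarrow>
                (\<exists>x. expect (ising_H N E g) \<phi> = complex_of_real x \<and> m \<le> x)))
    \<and> (\<forall>V. V \<subseteq> {0..<N} \<and> (\<forall>S. S \<subseteq> {0..<N} \<longrightarrow> cost_f N E g V \<le> cost_f N E g S)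
            \<longrightarrow> n_optimal N E (card V) V)"
proof -
  let ?m = "min_edge_energy N E g"
  obtain T where T: "T \<subseteq> {0..<N}" "cost_f N E g T = ?m"
    using cost_f_attains_min_edge_energy[OF assms(2)] .
  have "stabilizer_state N (zero_plus_state N T)"
    "expect (ising_H N E g) (zero_plus_state N T) = complex_of_real ?m"
    using stabilizer_state_zero_plus_state[OF T(1)] expect_ising_H_zero_plus_state[OF T(1) assms(1)] T(2)
    by simp_all
  moreover have "\<exists>x. expect (ising_H N E g) \<phi> = complex_of_real x \<and> ?m \<le> x"
    if \<phi>: "stabilizer_state N \<phi>" for \<phi>
  proof -
    obtain x S where "expect (ising_H N E g) \<phi> = complex_of_real x" "S \<subseteq> {0..<N}" "cost_f N E g S \<le> x"
      using stabilizer_energy_ge_cost[OF assms \<phi>] .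
    then show ?thesis using min_edge_energy_le_cost_f[of S N E g] by force
  qed
  moreover have "n_optimal N E (card V) V"
    if "V \<subseteq> {0..<N}" "\<forall>S. S \<subseteq> {0..<N} \<longrightarrow> cost_f N E g V \<le> cost_f N E g S" for V
    using cost_f_minimizer_n_optimal[OF assms(2)] that by blast
  ultimately show ?thesis unfolding Let_def min_edge_energy_def[symmetric] by blast
qed

end
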